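(* Let $L\ge2$ and let $[0,1]^2=S_0\supset S_1\supset\cdots$ be such that each $S_n$ is the union of $L^n$ squares of $\mathcal{D}_n$, one from each column; let $\mathcal{S}_n=\{Q\in\mathcal{D}_n:Q\subset S_n\}$. Define \[ f_{n,\theta}(t)=\#\{Q\in\mathcal{S}_n:\ell(\theta,t)\cap Q\neq\varnothing\},\qquad \Theta_k=\{\theta\in[0,\pi/2]:\tan\theta\in[L^k,L^{k+1}]\}. \] Then there is a constant $C$ depending only on $L$ such that \[ \int_{\Theta_k}\|f_{n,\theta}\|_{L^2(\mathbb{R})}^2\,d\theta\le C\,\frac{n}{L^{2k}}\qquad\text{for all } k=1,\dots,\lfloor\log_Ln\rfloor . \]
   Context: $\mathcal{D}_n$ is the set of closed squares obtained by dividing $[0,1]^2$ into an $L^n\times L^n$ grid. $\operatorname{proj}_\theta(x)=\langle x,(-\sin\theta,\cos\theta)\rangle$ and $\ell(\theta,t)=\operatorname{proj}_\theta^{-1}(t)$, the line with direction $(\cos\theta,\sin\theta)$ through $t(-\sin\theta,\cos\theta)$. *)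

theory Defs
  imports "HOL-Analysis.Analysis"
begin

definition grid_sq :: "nat \<Rightarrow> nat \<Rightarrow> nat \<Rightarrow> nat \<Rightarrow> (real \<times> real) set" where
  "grid_sq L n i j =
     {real i / real L ^ n .. real (i + 1) / real L ^ n} \<times>
     {real j / real L ^ n .. real (j + 1) / real L ^ n}"

definition grid :: "nat \<Rightarrow> nat \<Rightarrow> (real \<times> real) set set" where
  "grid L n = {grid_sq L n i j | i j. i < L ^ n \<and> j < L ^ n}"

definition proj :: "real \<Rightarrow> real \<times> real \<Rightarrow> real" where
  "proj \<theta> x = x \<bullet> (- sin \<theta>, cos \<theta>)"

definition line :: "real \<Rightarrow> real \<Rightarrow> (real \<times> real) set" where
  "line \<theta> t = proj \<theta> -` {t}"

definition admissible :: "nat \<Rightarrow> (nat \<Rightarrow> (real \<times> real) set) \<Rightarrow> bool" where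
  "admissible L S \<longleftrightarrow>
     S 0 = {0..1} \<times> {0..1} \<and>
     (\<forall>n. S (Suc n) \<subseteq> S n) \<and>
     (\<forall>n. \<exists>c. (\<forall>i<L ^ n. c i < L ^ n) \<and> S n = (\<Union>i<L ^ n. grid_sq L n i (c i)))"

definition squares :: "nat \<Rightarrow> (nat \<Rightarrow> (real \<times> real) set) \<Rightarrow> nat \<Rightarrow> (real \<times> real) set set" where
  "squares L S n = {Q \<in> grid L n. Q \<subseteq> S n}"

definition fcount :: "nat \<Rightarrow> (nat \<Rightarrow> (real \<times> real) set) \<Rightarrow> nat \<Rightarrow> real \<Rightarrow> real \<Rightarrow> real" where
  "fcount L S n \<theta> t = real (card {Q \<in> squares L S n. line \<theta> t \<inter> Q \<noteq> {}})"

definition Theta :: "nat \<Rightarrow> nat \<Rightarrow> real set" where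
  "Theta L k = {\<theta> \<in> {0..pi/2}. tan \<theta> \<in> {real L ^ k .. real L ^ (k + 1)}}"

end

theory Submission
  imports Defs
begin

(* Write c_i for the row of the square of S_n in column i. For theta in Theta_k the line
   l(theta, t) can meet that square only if t lies in its shadow, an interval of length at
   most 2 L^-n, so the squared L^2 norm of f_{n,theta} is at most 2 L^-n times the number of
   pairs (i, j) whose shadows overlap, i.e. with |proj_theta (i - j, c_i - c_j)| <= 2.
   Integrating over theta, a pair with m = i - j and d = c_i - c_j contributes the length of
   the angle set where this happens: O(L^-k) if |m| < 5, and otherwise O(1 / (|m| L^k)),
   and only if |m| L^k <= 2 |d|. Nestedness gives |d| < L^r as soon as i and j lie in the
   same block of L^r columns, so such a pair is split by the blocks of size L^(r-1) for
   some r <= n with |m| < 2 L^(r-k). Summing 1/|m| over the pairs split at scale r gives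
   O(L^(n+1-k)), so these pairs contribute O(n L^(n+1-2k)) in total, while the
   near-diagonal pairs contribute O(L^(n-k)) <= O(n L^(n-2k)) because L^k <= n. *)

lemma card_mod_in_le:
  fixes N B :: nat
  assumes "0 < B" "B dvd N" "finite R"
  shows "card {i. i < N \<and> i mod B \<in> R} \<le> N div B * card R"
proof -
  have "{i. i < N \<and> i mod B \<in> R} \<subseteq> (\<lambda>(q, u). q * B + u) ` ({..<N div B} \<times> R)"
  proof
    fix i assume "i \<in> {i. i < N \<and> i mod B \<in> R}"
    moreover have "i div B < N div B" if "i < N"
      using that assms(1,2) by (simp add: less_mult_imp_div_less)
    ultimately show "i \<in> (\<lambda>(q, u). q * B + u) ` ({..<N div B} \<times> R)"
      by (auto intro!: image_eqI[where x = "(i div B, i mod B)"])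
  qed
  then have "card {i. i < N \<and> i mod B \<in> R} \<le> card ({..<N div B} \<times> R)"
    using assms(3) by (meson card_image_le card_mono finite_SigmaI finite_imageI finite_lessThan order_trans)
  then show ?thesis by (simp add: card_cartesian_product)
qed

lemma card_block_crossings_le:
  fixes N B d :: nat
  assumes "0 < B" "B dvd N"
  shows "card {i. i < N \<and> i div B \<noteq> (i + d) div B} \<le> N div B * d"
proof -
  have "B - d \<le> i mod B" if "i div B \<noteq> (i + d) div B" for i
  proof (rule ccontr)
    assume "\<not> B - d \<le> i mod B"
    then have "(i mod B + d) div B = 0" by simp
    moreover have "(i + d) div B = i div B + (i mod B + d) div B"
    proof -
      have "i + d = (i mod B + d) + i div B * B" by simp
      then show ?thesis using assms(1) by (metis add.commute div_mult_self1 less_not_refl)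
    qed
    ultimately show False using that by simp
  qed
  then have "{i. i < N \<and> i div B \<noteq> (i + d) div B} \<subseteq> {i. i < N \<and> i mod B \<in> {B - d..<B}}"
    using assms(1) by auto
  then have "card {i. i < N \<and> i div B \<noteq> (i + d) div B} \<le> card {i. i < N \<and> i mod B \<in> {B - d..<B}}"
    by (intro card_mono) auto
  also have "\<dots> \<le> N div B * card {B - d..<B}"
    using assms by (intro card_mod_in_le) auto
  also have "\<dots> \<le> N div B * d" by (intro mult_le_mono2) simp
  finally show ?thesis .
qed

definition cross_block_weight :: "nat \<Rightarrow> real \<Rightarrow> nat \<Rightarrow> nat \<Rightarrow> real" where
  "cross_block_weight B D i j =
     (if i div B \<noteq> j div B \<and> \<bar>real i - real j\<bar> < D then 1 / \<bar>real i - real j\<bar> else 0)"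

lemma cross_block_weight_nonneg: "0 \<le> cross_block_weight B D i j"
  by (simp add: cross_block_weight_def)

lemma cross_block_weight_commute: "cross_block_weight B D i j = cross_block_weight B D j i"
  by (simp add: cross_block_weight_def abs_minus_commute)

lemma sum_symmetric_eq_twice_upper:
  fixes f :: "nat \<Rightarrow> nat \<Rightarrow> real"
  assumes "\<And>i j. f i j = f j i" "\<And>i. f i i = 0"
  shows "(\<Sum>i<N. \<Sum>j<N. f i j) = 2 * (\<Sum>i<N. \<Sum>j\<in>{j. j < N \<and> i < j}. f i j)"
proof -
  have "f i j = (if i < j then f i j else 0) + (if j < i then f i j else 0)" for i j
    using assms(2) by (cases i j rule: linorder_cases) simp_all
  then have "(\<Sum>j<N. f i j) = (\<Sum>j\<in>{j \<in> {..<N}. i < j}. f i j) + (\<Sum>j\<in>{j \<in> {..<N}. j < i}. f i j)" for i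
    by (simp only: sum.inter_filter finite_lessThan sum.distrib[symmetric])
  moreover have "(\<Sum>i<N. \<Sum>j\<in>{j. j \<in> {..<N} \<and> j < i}. f i j) = (\<Sum>j<N. \<Sum>i\<in>{i. i \<in> {..<N} \<and> j < i}. f i j)"
    by (rule sum.swap_restrict) simp_all
  ultimately show ?thesis
    using assms(1) by (simp add: sum.distrib)
qed

lemma sum_cross_block_weight_le:
  fixes N B :: nat and D :: real
  assumes B: "0 < B" "B dvd N" and D: "0 \<le> D"
  shows "(\<Sum>i<N. \<Sum>j<N. cross_block_weight B D i j) \<le> 2 * D * real (N div B)"
proof -
  define c where "c i d = (if i div B \<noteq> (i + d) div B \<and> real d < D then 1 / real d else 0)" for i d
  have "(\<Sum>i<N. \<Sum>j\<in>{j. j < N \<and> i < j}. cross_block_weight B D i j) \<le> (\<Sum>i<N. \<Sum>d<N. c i d)"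
  proof (intro sum_mono sum_le_included[where i = "\<lambda>d. _ + d"] ballI)
    fix i j assume "j \<in> {j. j < N \<and> i < j}"
    then show "\<exists>d\<in>{..<N}. i + d = j \<and> cross_block_weight B D i j \<le> c i d"
      by (intro bexI[of _ "j - i"]) (auto simp: cross_block_weight_def c_def)
  qed (auto simp: c_def)
  also have "\<dots> = (\<Sum>d<N. \<Sum>i<N. c i d)" by (rule sum.swap)
  also have "\<dots> \<le> (\<Sum>d<N. if 0 < d \<and> real d < D then real (N div B) else 0)"
  proof (rule sum_mono)
    fix d
    have "(\<Sum>i<N. c i d) = (if real d < D then real (card {i. i < N \<and> i div B \<noteq> (i + d) div B}) / real d else 0)"
      unfolding c_def by (simp add: sum.If_cases Int_def conj_commute)
    also have "\<dots> \<le> (if 0 < d \<and> real d < D then real (N div B) else 0)"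
      using card_block_crossings_le[OF B, of d]
      by (auto simp: divide_le_eq simp flip: of_nat_mult)
    finally show "(\<Sum>i<N. c i d) \<le> (if 0 < d \<and> real d < D then real (N div B) else 0)" .
  qed
  also have "\<dots> = real (card {d \<in> {..<N}. 0 < d \<and> real d < D}) * real (N div B)"
    by (simp add: sum.If_cases Int_def)
  also have "\<dots> \<le> D * real (N div B)"
  proof (intro mult_right_mono)
    have "{d \<in> {..<N}. 0 < d \<and> real d < D} \<subseteq> {1..nat \<lfloor>D\<rfloor>}"
      by (auto simp: le_nat_iff le_floor_iff)
    then have "card {d \<in> {..<N}. 0 < d \<and> real d < D} \<le> nat \<lfloor>D\<rfloor>"
      by (metis card_atLeastAtMost card_mono diff_Suc_1 finite_atLeastAtMost)
    then show "real (card {d \<in> {..<N}. 0 < d \<and> real d < D}) \<le> D"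
      using D by linarith
  qed simp
  finally have "(\<Sum>i<N. \<Sum>j\<in>{j. j < N \<and> i < j}. cross_block_weight B D i j) \<le> D * real (N div B)" .
  moreover have "(\<Sum>i<N. \<Sum>j<N. cross_block_weight B D i j)
      = 2 * (\<Sum>i<N. \<Sum>j\<in>{j. j < N \<and> i < j}. cross_block_weight B D i j)"
    by (rule sum_symmetric_eq_twice_upper) (rule cross_block_weight_commute, simp add: cross_block_weight_def)
  ultimately show ?thesis
    by (simp add: mult.assoc)
qed

lemma sum_cross_block_weight_scale_le:
  assumes "0 < L" "1 \<le> r" "r \<le> n"
  shows "(\<Sum>i<L ^ n. \<Sum>j<L ^ n. cross_block_weight (L ^ (r - 1)) (2 * real L ^ r / real L ^ k) i j)
    \<le> 4 * real L * real L ^ n / real L ^ k"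
proof -
  have dvd: "L ^ (r - 1) dvd L ^ n"
    using assms(3) by (simp add: le_imp_power_dvd)
  have "real L ^ r = real L * real L ^ (r - 1)"
    using assms(2) by (simp flip: power_Suc)
  moreover have "real (L ^ n div L ^ (r - 1)) = real L ^ n / real L ^ (r - 1)"
    using dvd by (simp add: real_of_nat_div)
  ultimately have "2 * (2 * real L ^ r / real L ^ k) * real (L ^ n div L ^ (r - 1))
      = 4 * real L * real L ^ n / real L ^ k"
    using assms(1) by (simp add: field_simps)
  moreover have "(\<Sum>i<L ^ n. \<Sum>j<L ^ n. cross_block_weight (L ^ (r - 1)) (2 * real L ^ r / real L ^ k) i j)
      \<le> 2 * (2 * real L ^ r / real L ^ k) * real (L ^ n div L ^ (r - 1))"
    using assms(1) dvd by (intro sum_cross_block_weight_le) simp_all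
  ultimately show ?thesis by linarith
qed

lemma sum_near_diagonal_le:
  fixes a :: real
  assumes "0 \<le> a"
  shows "(\<Sum>j<N. if \<bar>real i - real j\<bar> < 5 then a else 0) \<le> 9 * a"
proof -
  have "{j \<in> {..<N}. \<bar>real i - real j\<bar> < 5} \<subseteq> {i - 4..i + 4}"
    by (auto simp: abs_less_iff)
  then have "card {j \<in> {..<N}. \<bar>real i - real j\<bar> < 5} \<le> card {i - 4..i + 4}"
    by (intro card_mono) simp_all
  also have "\<dots> \<le> 9" by simp
  finally have "real (card {j \<in> {..<N}. \<bar>real i - real j\<bar> < 5}) \<le> 9" by simp
  with assms show ?thesis
    by (simp add: sum.If_cases Int_def mult_right_mono)
qed

definition grid_centre :: "nat \<Rightarrow> nat \<Rightarrow> nat \<Rightarrow> nat \<Rightarrow> real \<times> real" where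
  "grid_centre L n i j = ((real i + 1/2) / real L ^ n, (real j + 1/2) / real L ^ n)"

lemma mem_grid_sq:
  "(x, y) \<in> grid_sq L n i j \<longleftrightarrow>
     real i / real L ^ n \<le> x \<and> x \<le> real (i + 1) / real L ^ n \<and>
     real j / real L ^ n \<le> y \<and> y \<le> real (j + 1) / real L ^ n"
  by (simp add: grid_sq_def)

lemma grid_centre_mem: "0 < L \<Longrightarrow> grid_centre L n i j \<in> grid_sq L n i j"
  by (simp add: grid_centre_def mem_grid_sq divide_right_mono)

lemma index_eq_div_of_centre_mem:
  fixes P :: real and M :: nat
  assumes "0 < P" "0 < M"
    and "real i / P \<le> (real a + 1/2) / (P * real M)" "(real a + 1/2) / (P * real M) \<le> real (i + 1) / P"
  shows "i = a div M"
proof -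
  have PM: "0 < P * real M" using assms(1,2) by simp
  have "real i / P * (P * real M) \<le> real a + 1/2" "real a + 1/2 \<le> real (i + 1) / P * (P * real M)"
    using assms(3,4) by (simp_all only: pos_le_divide_eq[OF PM] pos_divide_le_eq[OF PM])
  moreover have "real i / P * (P * real M) = real (M * i)" "real (i + 1) / P * (P * real M) = real (M * Suc i)"
    using assms(1) by (simp_all add: field_simps)
  ultimately have "real (M * i) \<le> real a + 1/2" "real a + 1/2 \<le> real (M * Suc i)"
    by simp_all
  then have "M * i \<le> a" "a < M * Suc i" by linarith+
  then show ?thesis by (simp add: div_nat_eqI)
qed

lemma grid_centre_mem_grid_sq:
  assumes "0 < L" "grid_centre L (n + r) a b \<in> grid_sq L n i j"
  shows "i = a div L ^ r" "j = b div L ^ r"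
proof -
  have P: "0 < real L ^ n" "0 < L ^ r" and scale: "real L ^ (n + r) = real L ^ n * real (L ^ r)"
    using assms(1) by (simp_all add: power_add)
  show "i = a div L ^ r" "j = b div L ^ r"
    using assms(2) by (auto simp: grid_centre_def mem_grid_sq scale intro: index_eq_div_of_centre_mem[OF P])
qed

lemma dist_less_of_div_eq:
  fixes a b B :: nat
  assumes "0 < B" "a div B = b div B"
  shows "\<bar>real a - real b\<bar> < real B"
proof -
  have "real a = real B * real (a div B) + real (a mod B)" "real b = real B * real (b div B) + real (b mod B)"
    by (simp_all flip: of_nat_mult of_nat_add)
  then have "real a - real b = real (a mod B) - real (b mod B)"
    using assms(2) by simp
  moreover have "real (a mod B) < real B" "real (b mod B) < real B"
    using assms(1) by simp_all
  ultimately show ?thesis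
    unfolding abs_less_iff by linarith
qed

(* row n i is the row of the square of S n in column i, i.e. the function c of admissible. *)
locale nested_rows =
  fixes L :: nat and S :: "nat \<Rightarrow> (real \<times> real) set" and row :: "nat \<Rightarrow> nat \<Rightarrow> nat"
  assumes L_pos: "0 < L"
    and nested: "S (Suc n) \<subseteq> S n"
    and S_eq: "S n = (\<Union>i<L ^ n. grid_sq L n i (row n i))"

lemma admissible_imp_nested_rows:
  assumes "admissible L S" "0 < L"
  obtains row where "nested_rows L S row"
proof -
  have "\<forall>n. \<exists>c. S n = (\<Union>i<L ^ n. grid_sq L n i (c i))"
    using assms(1) unfolding admissible_def by blast
  then obtain row where "\<And>n. S n = (\<Union>i<L ^ n. grid_sq L n i (row n i))"
    by metis
  with assms show ?thesis
    using that unfolding nested_rows_def admissible_def by blast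
qed

context nested_rows
begin

lemma row_parent:
  assumes "i < L ^ Suc n"
  shows "row (Suc n) i div L = row n (i div L)"
proof -
  have "grid_centre L (Suc n) i (row (Suc n) i) \<in> S (Suc n)"
    using assms grid_centre_mem[OF L_pos] by (auto simp: S_eq[of "Suc n"])
  then have "grid_centre L (n + 1) i (row (Suc n) i) \<in> S n"
    using nested by auto
  then obtain i' where "grid_centre L (n + 1) i (row (Suc n) i) \<in> grid_sq L n i' (row n i')"
    by (auto simp: S_eq[of n])
  from grid_centre_mem_grid_sq[OF L_pos this] show ?thesis by simp
qed

lemma row_div_power:
  "r \<le> n \<Longrightarrow> i < L ^ n \<Longrightarrow> row n i div L ^ r = row (n - r) (i div L ^ r)"
proof (induction r arbitrary: n i)
  case 0
  then show ?case by simp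
next
  case (Suc r)
  have "n = Suc (n - Suc r) + r"
    using Suc.prems(1) by simp
  then have "L ^ n = L ^ Suc (n - Suc r) * L ^ r"
    by (metis power_add)
  then have "i div L ^ r < L ^ Suc (n - Suc r)"
    using Suc.prems(2) by (simp add: less_mult_imp_div_less)
  then have parent: "row (Suc (n - Suc r)) (i div L ^ r) div L = row (n - Suc r) (i div L ^ r div L)"
    by (rule row_parent)
  have "row n i div L ^ Suc r = row n i div L ^ r div L"
    by (simp only: power_Suc2 div_mult2_eq)
  also have "\<dots> = row (Suc (n - Suc r)) (i div L ^ r) div L"
    using Suc by (simp add: Suc_diff_Suc)
  also have "\<dots> = row (n - Suc r) (i div L ^ Suc r)"
    by (simp only: parent power_Suc2 div_mult2_eq)
  finally show ?case .
qed

lemma row_dist_less: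
  assumes "r \<le> n" "i < L ^ n" "i' < L ^ n" "i div L ^ r = i' div L ^ r"
  shows "\<bar>real (row n i) - real (row n i')\<bar> < real L ^ r"
  using dist_less_of_div_eq[of "L ^ r" "row n i" "row n i'"] row_div_power assms L_pos by simp

lemma squares_eq_row:
  assumes "Q \<in> squares L S n"
  obtains i where "i < L ^ n" "Q = grid_sq L n i (row n i)"
proof -
  obtain a b where ab: "Q = grid_sq L n a b" "Q \<subseteq> S n"
    using assms unfolding squares_def grid_def by blast
  then have "grid_centre L n a b \<in> S n"
    using grid_centre_mem[OF L_pos] by auto
  then obtain i where i: "i < L ^ n" "grid_centre L (n + 0) a b \<in> grid_sq L n i (row n i)"
    by (auto simp: S_eq[of n])
  then have "i = a" "row n i = b"
    using grid_centre_mem_grid_sq[OF L_pos i(2)] by simp_all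
  with i(1) ab(1) that show ?thesis by blast
qed

end

lemma proj_Pair: "proj \<theta> (x, y) = y * cos \<theta> - x * sin \<theta>"
  by (simp add: proj_def inner_prod_def)

(* For 0 <= theta <= pi/2, the image of grid_sq L n i j under proj theta. *)
definition shadow :: "nat \<Rightarrow> nat \<Rightarrow> real \<Rightarrow> nat \<Rightarrow> nat \<Rightarrow> real set" where
  "shadow L n \<theta> i j =
     {(real j * cos \<theta> - real (i + 1) * sin \<theta>) / real L ^ n ..
      (real (j + 1) * cos \<theta> - real i * sin \<theta>) / real L ^ n}"

lemma proj_mem_shadow:
  assumes "0 < L" "0 \<le> sin \<theta>" "0 \<le> cos \<theta>" "x \<in> grid_sq L n i j"
  shows "proj \<theta> x \<in> shadow L n \<theta> i j"
proof -
  obtain a b where x: "x = (a, b)" by fastforce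
  have P: "0 < real L ^ n" using assms(1) by simp
  define X Y where "X = a * real L ^ n" and "Y = b * real L ^ n"
  have "real i \<le> X" "X \<le> real (i + 1)" "real j \<le> Y" "Y \<le> real (j + 1)"
    using assms(4) P by (simp_all add: x X_def Y_def mem_grid_sq field_simps)
  then have "real j * cos \<theta> \<le> Y * cos \<theta>" "Y * cos \<theta> \<le> real (j + 1) * cos \<theta>"
    "real i * sin \<theta> \<le> X * sin \<theta>" "X * sin \<theta> \<le> real (i + 1) * sin \<theta>"
    using assms(2,3) by (simp_all add: mult_right_mono)
  moreover have "(b * cos \<theta> - a * sin \<theta>) * real L ^ n = Y * cos \<theta> - X * sin \<theta>"
    by (simp add: X_def Y_def algebra_simps)
  ultimately have "real j * cos \<theta> - real (i + 1) * sin \<theta> \<le> (b * cos \<theta> - a * sin \<theta>) * real L ^ n"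
    "(b * cos \<theta> - a * sin \<theta>) * real L ^ n \<le> real (j + 1) * cos \<theta> - real i * sin \<theta>"
    by linarith+
  then show ?thesis
    using P by (simp add: shadow_def x proj_Pair field_simps)
qed

lemma line_meets_grid_sq_imp_mem_shadow:
  assumes "0 < L" "0 \<le> sin \<theta>" "0 \<le> cos \<theta>" "line \<theta> t \<inter> grid_sq L n i j \<noteq> {}"
  shows "t \<in> shadow L n \<theta> i j"
proof -
  obtain x where "proj \<theta> x = t" "x \<in> grid_sq L n i j"
    using assms(4) by (auto simp: line_def)
  then show ?thesis
    using proj_mem_shadow[OF assms(1-3)] by blast
qed

lemma emeasure_shadow:
  assumes "0 \<le> sin \<theta> + cos \<theta>"
  shows "emeasure lborel (shadow L n \<theta> i j) = ennreal ((sin \<theta> + cos \<theta>) / real L ^ n)"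
  using assms by (simp add: shadow_def diff_divide_distrib[symmetric] divide_right_mono algebra_simps)

lemma shadows_meet_imp_proj_le:
  assumes "0 < L" "t \<in> shadow L n \<theta> i j" "t \<in> shadow L n \<theta> i' j'"
  shows "\<bar>proj \<theta> (real i - real i', real j - real j')\<bar> \<le> sin \<theta> + cos \<theta>"
proof -
  have "(real j * cos \<theta> - real (i + 1) * sin \<theta>) / real L ^ n \<le> (real (j' + 1) * cos \<theta> - real i' * sin \<theta>) / real L ^ n"
       "(real j' * cos \<theta> - real (i' + 1) * sin \<theta>) / real L ^ n \<le> (real (j + 1) * cos \<theta> - real i * sin \<theta>) / real L ^ n"
    using assms(2,3) unfolding shadow_def atLeastAtMost_iff by linarith+
  then have "real j * cos \<theta> - real (i + 1) * sin \<theta> \<le> real (j' + 1) * cos \<theta> - real i' * sin \<theta>"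
       "real j' * cos \<theta> - real (i' + 1) * sin \<theta> \<le> real (j + 1) * cos \<theta> - real i * sin \<theta>"
    using assms(1) by (simp_all add: divide_le_cancel)
  then show ?thesis
    by (simp add: proj_Pair abs_le_iff algebra_simps)
qed

lemma sin_plus_cos_le_2: "sin \<theta> + cos \<theta> \<le> (2::real)"
  using sin_le_one[of \<theta>] cos_le_one[of \<theta>] by linarith

lemma sum_indicator_eq_card_filter:
  "finite A \<Longrightarrow> (\<Sum>i\<in>A. indicator (J i) t) = real (card {i \<in> A. t \<in> J i})"
  by (simp add: indicator_def of_bool_def sum.If_cases Int_def)

lemma nn_integral_sum_cmult_indicator:
  fixes c :: "'p \<Rightarrow> real"
  assumes "finite A" "\<And>p. p \<in> A \<Longrightarrow> 0 \<le> c p" "\<And>p. p \<in> A \<Longrightarrow> X p \<in> sets M"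
  shows "(\<integral>\<^sup>+x. ennreal (\<Sum>p\<in>A. c p * indicator (X p) x) \<partial>M) = (\<Sum>p\<in>A. ennreal (c p) * emeasure M (X p))"
proof -
  have "ennreal (\<Sum>p\<in>A. c p * indicator (X p) x) = (\<Sum>p\<in>A. ennreal (c p) * indicator (X p) x)" for x
  proof -
    have "ennreal (\<Sum>p\<in>A. c p * indicator (X p) x) = (\<Sum>p\<in>A. ennreal (c p * indicator (X p) x))"
      using assms(2) by (intro sum_ennreal[symmetric]) simp
    also have "\<dots> = (\<Sum>p\<in>A. ennreal (c p) * indicator (X p) x)"
      by (intro sum.cong refl) (simp split: split_indicator)
    finally show ?thesis .
  qed
  then have "(\<integral>\<^sup>+x. ennreal (\<Sum>p\<in>A. c p * indicator (X p) x) \<partial>M)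
      = (\<integral>\<^sup>+x. (\<Sum>p\<in>A. ennreal (c p) * indicator (X p) x) \<partial>M)"
    by simp
  also have "\<dots> = (\<Sum>p\<in>A. \<integral>\<^sup>+x. ennreal (c p) * indicator (X p) x \<partial>M)"
    using assms(1,3) by (intro nn_integral_sum) auto
  also have "\<dots> = (\<Sum>p\<in>A. ennreal (c p) * emeasure M (X p))"
    using assms(3) by (intro sum.cong refl nn_integral_cmult_indicator)
  finally show ?thesis .
qed

context nested_rows
begin

lemma fcount_le_sum_indicator:
  assumes "0 \<le> sin \<theta>" "0 \<le> cos \<theta>"
  shows "fcount L S n \<theta> t \<le> (\<Sum>i<L ^ n. indicator (shadow L n \<theta> i (row n i)) t)"
proof -
  let ?Q = "\<lambda>i. grid_sq L n i (row n i)"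
  have "{Q \<in> squares L S n. line \<theta> t \<inter> Q \<noteq> {}} \<subseteq> ?Q ` {i \<in> {..<L ^ n}. t \<in> shadow L n \<theta> i (row n i)}"
  proof
    fix Q assume Q: "Q \<in> {Q \<in> squares L S n. line \<theta> t \<inter> Q \<noteq> {}}"
    then obtain i where "i < L ^ n" "Q = ?Q i"
      using squares_eq_row by blast
    with Q show "Q \<in> ?Q ` {i \<in> {..<L ^ n}. t \<in> shadow L n \<theta> i (row n i)}"
      using line_meets_grid_sq_imp_mem_shadow[OF L_pos assms] by auto
  qed
  then have "card {Q \<in> squares L S n. line \<theta> t \<inter> Q \<noteq> {}} \<le> card (?Q ` {i \<in> {..<L ^ n}. t \<in> shadow L n \<theta> i (row n i)})"
    by (rule card_mono[rotated]) simp
  also have "\<dots> \<le> card {i \<in> {..<L ^ n}. t \<in> shadow L n \<theta> i (row n i)}"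
    by (rule card_image_le) simp
  finally show ?thesis
    unfolding fcount_def sum_indicator_eq_card_filter[OF finite_lessThan] by simp
qed

definition offset :: "nat \<Rightarrow> nat \<times> nat \<Rightarrow> real \<times> real" where
  "offset n p = (real (fst p) - real (snd p), real (row n (fst p)) - real (row n (snd p)))"

lemma fcount_sq_le_sum_indicator:
  assumes "0 \<le> sin \<theta>" "0 \<le> cos \<theta>"
  shows "(fcount L S n \<theta> t)\<^sup>2 \<le>
    (\<Sum>p\<in>{p \<in> {..<L ^ n} \<times> {..<L ^ n}. \<bar>proj \<theta> (offset n p)\<bar> \<le> 2}. indicator (shadow L n \<theta> (fst p) (row n (fst p))) t)"
proof -
  let ?J = "\<lambda>i. shadow L n \<theta> i (row n i)"
  let ?I = "{..<L ^ n} \<times> {..<L ^ n}"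
  have "(fcount L S n \<theta> t)\<^sup>2 \<le> (\<Sum>i<L ^ n. indicator (?J i) t)\<^sup>2"
    using fcount_le_sum_indicator[OF assms] by (simp add: fcount_def power_mono)
  also have "\<dots> = (\<Sum>p\<in>?I. indicator (?J (fst p)) t * indicator (?J (snd p)) t)"
    by (simp only: power2_eq_square sum_product sum.cartesian_product split_def)
  also have "\<dots> \<le> (\<Sum>p\<in>?I. if \<bar>proj \<theta> (offset n p)\<bar> \<le> 2 then indicator (?J (fst p)) t else 0)"
  proof (rule sum_mono)
    fix p :: "nat \<times> nat"
    have "\<bar>proj \<theta> (offset n p)\<bar> \<le> 2" if "t \<in> ?J (fst p)" "t \<in> ?J (snd p)"
      using order_trans[OF shadows_meet_imp_proj_le[OF L_pos that] sin_plus_cos_le_2]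
      by (simp add: offset_def)
    then show "indicator (?J (fst p)) t * indicator (?J (snd p)) t
        \<le> (if \<bar>proj \<theta> (offset n p)\<bar> \<le> 2 then indicator (?J (fst p)) t else 0 :: real)"
      by (simp split: split_indicator)
  qed
  finally show ?thesis
    by (simp add: sum.inter_filter)
qed

lemma nn_integral_fcount_sq_le:
  assumes "0 \<le> sin \<theta>" "0 \<le> cos \<theta>"
  shows "(\<integral>\<^sup>+t. ennreal ((fcount L S n \<theta> t)\<^sup>2) \<partial>lborel) \<le>
    ennreal (card {p \<in> {..<L ^ n} \<times> {..<L ^ n}. \<bar>proj \<theta> (offset n p)\<bar> \<le> 2} * (2 / real L ^ n))"
proof -
  let ?C = "{p \<in> {..<L ^ n} \<times> {..<L ^ n}. \<bar>proj \<theta> (offset n p)\<bar> \<le> 2}"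
  have "(\<integral>\<^sup>+t. ennreal ((fcount L S n \<theta> t)\<^sup>2) \<partial>lborel)
      \<le> (\<integral>\<^sup>+t. ennreal (\<Sum>p\<in>?C. indicator (shadow L n \<theta> (fst p) (row n (fst p))) t) \<partial>lborel)"
    by (intro nn_integral_mono ennreal_leI fcount_sq_le_sum_indicator[OF assms])
  also have "\<dots> = (\<Sum>p\<in>?C. emeasure lborel (shadow L n \<theta> (fst p) (row n (fst p))))"
    using nn_integral_sum_cmult_indicator[of ?C "\<lambda>_. 1" "\<lambda>p. shadow L n \<theta> (fst p) (row n (fst p))" lborel]
    by (simp add: shadow_def)
  also have "\<dots> = (\<Sum>p\<in>?C. ennreal ((sin \<theta> + cos \<theta>) / real L ^ n))"
    using assms by (simp add: emeasure_shadow)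
  also have "\<dots> = ennreal (card ?C * ((sin \<theta> + cos \<theta>) / real L ^ n))"
    using assms by (subst sum_ennreal) simp_all
  also have "\<dots> \<le> ennreal (card ?C * (2 / real L ^ n))"
    using sin_plus_cos_le_2 by (intro ennreal_leI mult_left_mono divide_right_mono) simp_all
  finally show ?thesis .
qed

end

lemma mvt_abs_diff_ge:
  fixes g g' :: "real \<Rightarrow> real"
  assumes "a \<le> b"
    and "\<And>x. a \<le> x \<Longrightarrow> x \<le> b \<Longrightarrow> (g has_real_derivative g' x) (at x)"
    and "\<And>x. a \<le> x \<Longrightarrow> x \<le> b \<Longrightarrow> \<delta> \<le> \<bar>g' x\<bar>"
  shows "\<delta> * (b - a) \<le> \<bar>g b - g a\<bar>"
proof (cases "a = b")
  case False
  with assms(1) have "a < b" by simp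
  then obtain z where z: "a < z" "z < b" "g b - g a = (b - a) * g' z"
    using MVT2[of a b g g'] assms(2) by auto
  then have "\<delta> * (b - a) \<le> \<bar>g' z\<bar> * (b - a)"
    using assms(3) \<open>a < b\<close> by (intro mult_right_mono) simp_all
  with z(3) \<open>a < b\<close> show ?thesis by (simp add: abs_mult)
qed simp

lemma Theta_bounds:
  assumes "2 \<le> L" "1 \<le> k" "\<theta> \<in> Theta L k"
  shows "0 < \<theta>" "\<theta> < pi / 2" "0 < cos \<theta>" "real L ^ k * cos \<theta> \<le> sin \<theta>" "4 / 5 \<le> sin \<theta>"
proof -
  have "2 \<le> real L" "real L \<le> real L ^ k"
    using assms(1,2) power_increasing[of 1 k "real L"] by simp_all
  then have Lk: "2 \<le> real L ^ k" by linarith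
  have \<theta>: "0 \<le> \<theta>" "\<theta> \<le> pi / 2" and tan: "real L ^ k \<le> tan \<theta>"
    using assms(3) by (auto simp: Theta_def)
  \<comment> \<open>tan (pi / 2) = 0 in HOL, so the upper end pi / 2 is excluded as well.\<close>
  have "tan \<theta> \<noteq> 0" using tan Lk by linarith
  then have "\<theta> \<noteq> 0" "\<theta> \<noteq> pi / 2"
    by (metis tan_zero, metis tan_pi_half)
  with \<theta> show "0 < \<theta>" "\<theta> < pi / 2" by simp_all
  then show cos: "0 < cos \<theta>"
    by (simp add: cos_gt_zero)
  have sin: "0 < sin \<theta>"
    using \<open>0 < \<theta>\<close> \<open>\<theta> < pi / 2\<close> by (simp add: sin_gt_zero)
  show cs: "real L ^ k * cos \<theta> \<le> sin \<theta>"
    using tan cos by (simp add: tan_def pos_le_divide_eq)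
  have "(2 * cos \<theta>)\<^sup>2 \<le> (sin \<theta>)\<^sup>2"
    using cs Lk cos by (intro power_mono) (auto intro: order_trans[OF mult_right_mono])
  then have "4 \<le> 5 * (sin \<theta>)\<^sup>2"
    by (simp add: power_mult_distrib cos_squared_eq)
  then have "(4 / 5)\<^sup>2 \<le> (sin \<theta>)\<^sup>2"
    by (simp add: power_divide)
  then show "4 / 5 \<le> sin \<theta>"
    using sin by (simp add: power2_le_iff_abs_le)
qed

lemma Theta_between_bounds:
  assumes "2 \<le> L" "1 \<le> k" "\<theta>\<^sub>1 \<in> Theta L k" "\<theta>\<^sub>2 \<in> Theta L k" "\<theta>\<^sub>1 \<le> x" "x \<le> \<theta>\<^sub>2"
  shows "4 / 5 \<le> sin x" "0 < cos x"
proof -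
  note b1 = Theta_bounds[OF assms(1-3)] and b2 = Theta_bounds[OF assms(1,2,4)]
  have "sin \<theta>\<^sub>1 \<le> sin x"
    using b1 b2 assms(5,6) by (intro sin_monotone_2pi_le) simp_all
  with b1 show "4 / 5 \<le> sin x" by simp
  show "0 < cos x"
    using b1 b2 assms(5,6) by (intro cos_gt_zero) simp_all
qed

lemma Theta_diam:
  assumes "2 \<le> L" "1 \<le> k"
  shows "\<theta>\<^sub>1 \<in> Theta L k \<Longrightarrow> \<theta>\<^sub>2 \<in> Theta L k \<Longrightarrow> \<bar>\<theta>\<^sub>1 - \<theta>\<^sub>2\<bar> \<le> 5 / (4 * real L ^ k)"
proof (induction \<theta>\<^sub>1 \<theta>\<^sub>2 rule: linorder_wlog)
  case (le \<theta>\<^sub>1 \<theta>\<^sub>2)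
  have Lk: "0 < real L ^ k" using assms(1) by simp
  have "4 / 5 \<le> \<bar>- sin x\<bar>" if "\<theta>\<^sub>1 \<le> x" "x \<le> \<theta>\<^sub>2" for x
    using Theta_between_bounds(1)[OF assms le(2,3) that] by simp
  then have "4 / 5 * (\<theta>\<^sub>2 - \<theta>\<^sub>1) \<le> \<bar>cos \<theta>\<^sub>2 - cos \<theta>\<^sub>1\<bar>"
    using le(1) by (intro mvt_abs_diff_ge[where g' = "\<lambda>x. - sin x"]) (auto intro: DERIV_cos)
  also have "\<dots> \<le> 1 / real L ^ k"
  proof -
    have "real L ^ k * cos \<theta> \<le> 1" "0 \<le> real L ^ k * cos \<theta>" if "\<theta> \<in> Theta L k" for \<theta>
      using Theta_bounds(3,4)[OF assms that] sin_le_one[of \<theta>] Lk by (linarith, simp)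
    from this[OF le(2)] this[OF le(3)]
    have "\<bar>real L ^ k * cos \<theta>\<^sub>2 - real L ^ k * cos \<theta>\<^sub>1\<bar> \<le> 1"
      by linarith
    moreover have "real L ^ k * cos \<theta>\<^sub>2 - real L ^ k * cos \<theta>\<^sub>1 = real L ^ k * (cos \<theta>\<^sub>2 - cos \<theta>\<^sub>1)"
      by (simp add: right_diff_distrib)
    ultimately have "\<bar>cos \<theta>\<^sub>2 - cos \<theta>\<^sub>1\<bar> * real L ^ k \<le> 1"
      using Lk by (simp add: abs_mult mult.commute)
    with Lk show ?thesis
      by (simp add: pos_le_divide_eq)
  qed
  finally show ?case
    using le(1) Lk by (simp add: field_simps)
qed (simp add: abs_minus_commute)

lemma Theta_proj_le_imp_sign:
  assumes "2 \<le> L" "1 \<le> k" "\<theta> \<in> Theta L k" "5 \<le> \<bar>m\<bar>" "\<bar>proj \<theta> (m, d)\<bar> \<le> 2"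
  shows "0 < m * d" "\<bar>m\<bar> * real L ^ k \<le> 2 * \<bar>d\<bar>"
proof -
  note b = Theta_bounds[OF assms(1-3)]
  have pos: "0 < d \<and> m * real L ^ k \<le> 2 * d" if "5 \<le> m" "\<bar>proj \<theta> (m, d)\<bar> \<le> 2" for m d
  proof -
    have "4 \<le> m * sin \<theta>"
      using mult_mono[of 5 m "4/5" "sin \<theta>"] that(1) b by simp
    then have dcos: "m * sin \<theta> / 2 \<le> d * cos \<theta>"
      using that(2) by (simp add: proj_Pair abs_le_iff)
    then have "0 < d * cos \<theta>"
      using \<open>4 \<le> m * sin \<theta>\<close> by linarith
    then have "0 < d"
      using b(3) by (simp add: zero_less_mult_iff)
    have "m * real L ^ k / 2 * sin \<theta> = m * sin \<theta> / 2 * real L ^ k"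
      by simp
    also have "\<dots> \<le> d * cos \<theta> * real L ^ k"
      using dcos by (rule mult_right_mono) simp
    also have "\<dots> = d * (real L ^ k * cos \<theta>)"
      by simp
    also have "\<dots> \<le> d * sin \<theta>"
      using b(4) \<open>0 < d\<close> by (simp add: mult_left_mono)
    finally have "m * real L ^ k / 2 * sin \<theta> \<le> d * sin \<theta>" .
    then have "m * real L ^ k \<le> 2 * d"
      using b by (simp add: sin_gt_zero mult_le_cancel_right_pos)
    with \<open>0 < d\<close> show ?thesis by simp
  qed
  have "0 < m * d \<and> \<bar>m\<bar> * real L ^ k \<le> 2 * \<bar>d\<bar>"
  proof (cases "0 < m")
    case True
    with pos[of m d] assms(4,5) show ?thesis
      by simp
  next
    case False
    with pos[of "- m" "- d"] assms(4,5) show ?thesis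
      by (simp add: proj_Pair abs_minus_commute mult_neg_neg)
  qed
  then show "0 < m * d" "\<bar>m\<bar> * real L ^ k \<le> 2 * \<bar>d\<bar>"
    by simp_all
qed

lemma Theta_proj_le_diam:
  assumes "2 \<le> L" "1 \<le> k" "5 \<le> \<bar>m\<bar>"
  shows "\<theta>\<^sub>1 \<in> Theta L k \<Longrightarrow> \<bar>proj \<theta>\<^sub>1 (m, d)\<bar> \<le> 2 \<Longrightarrow> \<theta>\<^sub>2 \<in> Theta L k \<Longrightarrow> \<bar>proj \<theta>\<^sub>2 (m, d)\<bar> \<le> 2 \<Longrightarrow>
    \<bar>\<theta>\<^sub>1 - \<theta>\<^sub>2\<bar> \<le> 5 / \<bar>d\<bar>"
proof (induction \<theta>\<^sub>1 \<theta>\<^sub>2 rule: linorder_wlog)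
  case (le \<theta>\<^sub>1 \<theta>\<^sub>2)
  have md: "0 < m * d"
    using Theta_proj_le_imp_sign[OF assms(1,2) le(2) assms(3) le(3)] by simp
  have "4 / 5 * \<bar>d\<bar> \<le> \<bar>- d * sin x - m * cos x\<bar>" if "\<theta>\<^sub>1 \<le> x" "x \<le> \<theta>\<^sub>2" for x
  proof -
    note b = Theta_between_bounds[OF assms(1,2) le(2,4) that]
    have "4 / 5 * \<bar>d\<bar> \<le> sin x * \<bar>d\<bar>"
      using b(1) by (rule mult_right_mono) simp
    also have "\<dots> \<le> \<bar>d * sin x + m * cos x\<bar>"
    proof (cases "0 < d")
      case True
      with md have "0 \<le> m * cos x" using b(2) by (simp add: zero_less_mult_iff)
      with True have "sin x * \<bar>d\<bar> \<le> d * sin x + m * cos x" by (simp add: mult.commute)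
      then show ?thesis by (rule order_trans) (rule abs_ge_self)
    next
      case False
      with md have "m * cos x \<le> 0" "d < 0" using b(2) by (auto simp: zero_less_mult_iff mult_nonpos_nonneg)
      then have "sin x * \<bar>d\<bar> \<le> - (d * sin x + m * cos x)" by (simp add: mult.commute)
      then show ?thesis by (rule order_trans) (rule abs_ge_minus_self)
    qed
    finally show ?thesis
      by (simp add: abs_minus_commute add.commute)
  qed
  then have "4 / 5 * \<bar>d\<bar> * (\<theta>\<^sub>2 - \<theta>\<^sub>1) \<le> \<bar>proj \<theta>\<^sub>2 (m, d) - proj \<theta>\<^sub>1 (m, d)\<bar>"
    using le(1) unfolding proj_Pair
    by (intro mvt_abs_diff_ge[where g' = "\<lambda>x. - d * sin x - m * cos x"])
       (auto intro!: derivative_eq_intros)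
  also have "\<dots> \<le> 4"
    using le(3,5) by linarith
  moreover have "0 < \<bar>d\<bar>"
    using md by auto
  ultimately show ?case
    using le(1) by (simp add: field_simps)
qed (simp add: abs_minus_commute)

lemma diam_le_imp_subset_interval:
  fixes A :: "real set"
  assumes "0 \<le> D" "\<And>x y. x \<in> A \<Longrightarrow> y \<in> A \<Longrightarrow> \<bar>x - y\<bar> \<le> D"
  shows "\<exists>l u. l \<le> u \<and> u - l \<le> 2 * D \<and> A \<subseteq> {l..u}"
proof (cases "A = {}")
  case True
  with assms(1) show ?thesis
    by (intro exI[of _ 0]) simp
next
  case False
  then obtain x where "x \<in> A" by blast
  have "A \<subseteq> {x - D..x + D}"
  proof
    fix y assume "y \<in> A"
    from this \<open>x \<in> A\<close> have "\<bar>y - x\<bar> \<le> D" by (rule assms(2))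
    then show "y \<in> {x - D..x + D}" by (simp add: abs_le_iff)
  qed
  with assms(1) show ?thesis
    by (intro exI[of _ "x - D"] exI[of _ "x + D"]) simp
qed

(* The length of an interval containing every theta in Theta L k with |proj theta (m, d)| <= 2;
   in the last case there is no such theta. *)
definition angular_width :: "nat \<Rightarrow> nat \<Rightarrow> real \<times> real \<Rightarrow> real" where
  "angular_width L k = (\<lambda>(m, d).
     if \<bar>m\<bar> < 5 then 5 / (2 * real L ^ k)
     else if \<bar>m\<bar> * real L ^ k \<le> 2 * \<bar>d\<bar> then 20 / (\<bar>m\<bar> * real L ^ k)
     else 0)"

lemma Theta_proj_le_subset_interval:
  assumes "2 \<le> L" "1 \<le> k"
  shows "\<exists>l u. l \<le> u \<and> u - l \<le> angular_width L k v \<and> {\<theta> \<in> Theta L k. \<bar>proj \<theta> v\<bar> \<le> 2} \<subseteq> {l..u}"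
proof -
  obtain m d where v: "v = (m, d)" by fastforce
  let ?A = "{\<theta> \<in> Theta L k. \<bar>proj \<theta> (m, d)\<bar> \<le> 2}"
  have Lk: "0 < real L ^ k" using assms(1) by simp
  consider "\<bar>m\<bar> < 5" | "5 \<le> \<bar>m\<bar>" "\<bar>m\<bar> * real L ^ k \<le> 2 * \<bar>d\<bar>" | "5 \<le> \<bar>m\<bar>" "\<not> \<bar>m\<bar> * real L ^ k \<le> 2 * \<bar>d\<bar>"
    by linarith
  then show ?thesis
  proof cases
    case 1
    have "\<bar>x - y\<bar> \<le> 5 / (4 * real L ^ k)" if "x \<in> ?A" "y \<in> ?A" for x y
      using that by (intro Theta_diam[OF assms]) simp_all
    then obtain l u where "l \<le> u" "u - l \<le> 2 * (5 / (4 * real L ^ k))" "?A \<subseteq> {l..u}"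
      using diam_le_imp_subset_interval[of "5 / (4 * real L ^ k)" ?A] Lk by auto
    with 1 show ?thesis
      unfolding v angular_width_def by (intro exI[of _ l] exI[of _ u]) simp
  next
    case 2
    have "\<bar>x - y\<bar> \<le> 5 / \<bar>d\<bar>" if "x \<in> ?A" "y \<in> ?A" for x y
      using that by (intro Theta_proj_le_diam[OF assms 2(1)]) simp_all
    then obtain l u where "l \<le> u" "u - l \<le> 2 * (5 / \<bar>d\<bar>)" "?A \<subseteq> {l..u}"
      using diam_le_imp_subset_interval[of "5 / \<bar>d\<bar>" ?A] by auto
    moreover have "2 * (5 / \<bar>d\<bar>) \<le> 20 / (\<bar>m\<bar> * real L ^ k)"
    proof -
      have "0 < \<bar>m\<bar> * real L ^ k" using 2(1) Lk by simp
      then have "20 / (2 * \<bar>d\<bar>) \<le> 20 / (\<bar>m\<bar> * real L ^ k)"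
        using 2(2) by (intro divide_left_mono) simp_all
      then show ?thesis by simp
    qed
    ultimately show ?thesis
      using 2 unfolding v angular_width_def by (intro exI[of _ l] exI[of _ u]) simp
  next
    case 3
    then have "?A \<subseteq> {0..0}"
      using Theta_proj_le_imp_sign(2)[OF assms _ 3(1)] by blast
    with 3 show ?thesis
      unfolding v angular_width_def by (intro exI[of _ 0] exI[of _ 0] conjI) simp_all
  qed
qed

lemma nn_integral_card_le_sum_widths:
  fixes A :: "'p \<Rightarrow> real set" and w :: "'p \<Rightarrow> real" and c :: real
  assumes "finite I" "0 \<le> c" "\<And>p. p \<in> I \<Longrightarrow> \<exists>l u. l \<le> u \<and> u - l \<le> w p \<and> A p \<subseteq> {l..u}"
  shows "(\<integral>\<^sup>+x. ennreal (card {p \<in> I. x \<in> A p} * c) \<partial>lborel) \<le> ennreal ((\<Sum>p\<in>I. w p) * c)"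
proof -
  obtain l u where lu: "\<And>p. p \<in> I \<Longrightarrow> l p \<le> u p \<and> u p - l p \<le> w p \<and> A p \<subseteq> {l p..u p}"
    using assms(3) by metis
  have "card {p \<in> I. x \<in> A p} * c \<le> (\<Sum>p\<in>I. c * indicator {l p..u p} x)" for x
  proof -
    have "{p \<in> I. x \<in> A p} \<subseteq> {p \<in> I. x \<in> {l p..u p}}"
      using lu by blast
    then have "card {p \<in> I. x \<in> A p} \<le> card {p \<in> I. x \<in> {l p..u p}}"
      using assms(1) by (intro card_mono) auto
    moreover have "(\<Sum>p\<in>I. c * indicator {l p..u p} x) = c * card {p \<in> I. x \<in> {l p..u p}}"
      using sum_indicator_eq_card_filter[OF assms(1), of "\<lambda>p. {l p..u p}" x]
      by (simp add: sum_distrib_left[symmetric])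
    ultimately show ?thesis
      using assms(2) by (simp add: mult.commute mult_left_mono)
  qed
  then have "(\<integral>\<^sup>+x. ennreal (card {p \<in> I. x \<in> A p} * c) \<partial>lborel)
      \<le> (\<integral>\<^sup>+x. ennreal (\<Sum>p\<in>I. c * indicator {l p..u p} x) \<partial>lborel)"
    by (intro nn_integral_mono ennreal_leI)
  also have "\<dots> = (\<Sum>p\<in>I. ennreal c * emeasure lborel {l p..u p})"
    using assms(1,2) by (intro nn_integral_sum_cmult_indicator) auto
  also have "\<dots> \<le> (\<Sum>p\<in>I. ennreal (c * w p))"
  proof (rule sum_mono)
    fix p assume "p \<in> I"
    with lu have "l p \<le> u p" "u p - l p \<le> w p" by auto
    then have "ennreal c * emeasure lborel {l p..u p} = ennreal (c * (u p - l p))"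
      using assms(2) by (simp add: ennreal_mult)
    also have "\<dots> \<le> ennreal (c * w p)"
      using \<open>u p - l p \<le> w p\<close> assms(2) by (intro ennreal_leI mult_left_mono)
    finally show "ennreal c * emeasure lborel {l p..u p} \<le> ennreal (c * w p)" .
  qed
  also have "\<dots> = ennreal (\<Sum>p\<in>I. c * w p)"
    using lu assms(2) by (intro sum_ennreal) (meson diff_ge_0_iff_ge order_trans mult_nonneg_nonneg)
  also have "(\<Sum>p\<in>I. c * w p) = (\<Sum>p\<in>I. w p) * c"
    by (simp add: sum_distrib_left mult.commute)
  finally show ?thesis .
qed

context nested_rows
begin

lemma splitting_scale:
  assumes "i < L ^ n" "j < L ^ n" "i \<noteq> j"
  obtains r where "1 \<le> r" "r \<le> n" "i div L ^ (r - 1) \<noteq> j div L ^ (r - 1)"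
    "\<bar>real (row n i) - real (row n j)\<bar> < real L ^ r"
proof -
  define r where "r = (LEAST r. i div L ^ r = j div L ^ r)"
  have "i div L ^ n = j div L ^ n"
    using assms by simp
  then have r: "i div L ^ r = j div L ^ r" "r \<le> n"
    unfolding r_def by (auto intro: LeastI Least_le)
  have "r \<noteq> 0"
  proof
    assume "r = 0"
    with r(1) assms(3) show False by simp
  qed
  then have "i div L ^ (r - 1) \<noteq> j div L ^ (r - 1)"
    unfolding r_def by (intro not_less_Least) simp
  with r(2) \<open>r \<noteq> 0\<close> row_dist_less[OF r(2) assms(1,2) r(1)] show ?thesis
    by (intro that[of r]) simp_all
qed

lemma angular_width_offset_le:
  assumes "i < L ^ n" "j < L ^ n"
  shows "angular_width L k (offset n (i, j))
    \<le> (if \<bar>real i - real j\<bar> < 5 then 5 / (2 * real L ^ k) else 0) +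
       20 / real L ^ k * (\<Sum>r\<in>{1..n}. cross_block_weight (L ^ (r - 1)) (2 * real L ^ r / real L ^ k) i j)"
    (is "_ \<le> ?near + 20 / real L ^ k * ?far")
proof -
  define m d where "m = real i - real j" and "d = real (row n i) - real (row n j)"
  have Lk: "0 < real L ^ k" using L_pos by simp
  have far: "0 \<le> ?far" by (simp add: sum_nonneg cross_block_weight_nonneg)
  consider "\<bar>m\<bar> < 5" | "5 \<le> \<bar>m\<bar>" "\<bar>m\<bar> * real L ^ k \<le> 2 * \<bar>d\<bar>" | "\<not> \<bar>m\<bar> * real L ^ k \<le> 2 * \<bar>d\<bar>"
    by linarith
  then show ?thesis
  proof cases
    case 1
    with far Lk show ?thesis by (simp add: angular_width_def offset_def m_def)
  next
    case 3
    with far Lk show ?thesis by (simp add: angular_width_def offset_def m_def d_def)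
  next
    case 2
    then have "i \<noteq> j" by (auto simp: m_def)
    with assms obtain r where r: "r \<in> {1..n}" "i div L ^ (r - 1) \<noteq> j div L ^ (r - 1)" "\<bar>d\<bar> < real L ^ r"
      unfolding d_def by (metis atLeastAtMost_iff splitting_scale)
    with 2 Lk have "\<bar>m\<bar> < 2 * real L ^ r / real L ^ k"
      by (simp add: pos_less_divide_eq)
    with r(2) have "cross_block_weight (L ^ (r - 1)) (2 * real L ^ r / real L ^ k) i j = 1 / \<bar>m\<bar>"
      by (simp add: cross_block_weight_def m_def)
    with r(1) have "1 / \<bar>m\<bar> \<le> ?far"
      by (metis (no_types, lifting) cross_block_weight_nonneg finite_atLeastAtMost member_le_sum)
    have "angular_width L k (offset n (i, j)) = 20 / real L ^ k * (1 / \<bar>m\<bar>)"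
      using 2 by (simp add: angular_width_def offset_def m_def d_def)
    also have "\<dots> \<le> 20 / real L ^ k * ?far"
      using \<open>1 / \<bar>m\<bar> \<le> ?far\<close> Lk by (intro mult_left_mono) simp_all
    finally show ?thesis
      using 2 by (simp add: m_def)
  qed
qed

lemma sum_angular_width_offset_le:
  "(\<Sum>p\<in>{..<L ^ n} \<times> {..<L ^ n}. angular_width L k (offset n p))
    \<le> real L ^ n * (9 * (5 / (2 * real L ^ k))) + 20 / real L ^ k * (real n * (4 * real L * real L ^ n / real L ^ k))"
proof -
  define N Q where "N = L ^ n" and "Q = real L ^ k"
  have Q: "0 < Q" using L_pos by (simp add: Q_def)
  let ?near = "\<lambda>i j. if \<bar>real i - real j\<bar> < 5 then 5 / (2 * Q) else 0"
  let ?cbw = "\<lambda>r. cross_block_weight (L ^ (r - 1)) (2 * real L ^ r / Q)"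
  have "(\<Sum>p\<in>{..<N} \<times> {..<N}. angular_width L k (offset n p))
      = (\<Sum>i<N. \<Sum>j<N. angular_width L k (offset n (i, j)))"
    by (simp add: sum.cartesian_product)
  also have "\<dots> \<le> (\<Sum>i<N. \<Sum>j<N. ?near i j + 20 / Q * (\<Sum>r\<in>{1..n}. ?cbw r i j))"
    unfolding N_def Q_def by (intro sum_mono angular_width_offset_le) simp_all
  also have "\<dots> = (\<Sum>i<N. \<Sum>j<N. ?near i j) + 20 / Q * (\<Sum>i<N. \<Sum>j<N. \<Sum>r\<in>{1..n}. ?cbw r i j)"
    by (simp add: sum.distrib sum_distrib_left)
  also have "\<dots> = (\<Sum>i<N. \<Sum>j<N. ?near i j) + 20 / Q * (\<Sum>r\<in>{1..n}. \<Sum>i<N. \<Sum>j<N. ?cbw r i j)"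
  proof -
    have "(\<Sum>i<N. \<Sum>j<N. \<Sum>r\<in>{1..n}. ?cbw r i j) = (\<Sum>r\<in>{1..n}. \<Sum>i<N. \<Sum>j<N. ?cbw r i j)"
      by (subst sum.swap) (intro sum.cong refl sum.swap)
    then show ?thesis by (simp only:)
  qed
  also have "\<dots> \<le> real N * (9 * (5 / (2 * Q))) + 20 / Q * (real n * (4 * real L * real L ^ n / Q))"
  proof (rule add_mono)
    have "(\<Sum>i<N. \<Sum>j<N. ?near i j) \<le> (\<Sum>i<N. 9 * (5 / (2 * Q)))"
      using Q by (intro sum_mono sum_near_diagonal_le) simp
    then show "(\<Sum>i<N. \<Sum>j<N. ?near i j) \<le> real N * (9 * (5 / (2 * Q)))"
      by simp
    have "(\<Sum>r\<in>{1..n}. \<Sum>i<N. \<Sum>j<N. ?cbw r i j) \<le> (\<Sum>r\<in>{1..n}. 4 * real L * real L ^ n / Q)"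
      unfolding N_def Q_def using L_pos by (intro sum_mono sum_cross_block_weight_scale_le) simp_all
    with Q show "20 / Q * (\<Sum>r\<in>{1..n}. \<Sum>i<N. \<Sum>j<N. ?cbw r i j) \<le> 20 / Q * (real n * (4 * real L * real L ^ n / Q))"
      by (intro mult_left_mono) simp_all
  qed
  finally show ?thesis
    by (simp add: N_def Q_def)
qed

lemma sum_angular_width_le:
  assumes "real L ^ k \<le> real n"
  shows "(\<Sum>p\<in>{..<L ^ n} \<times> {..<L ^ n}. angular_width L k (offset n p)) * (2 / real L ^ n)
    \<le> (45 + 160 * real L) * real n / real L ^ (2 * k)"
proof -
  define P Q where "P = real L ^ n" and "Q = real L ^ k"
  have P: "0 < P" and Q: "0 < Q"
    using L_pos by (simp_all add: P_def Q_def)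
  have "(\<Sum>p\<in>{..<L ^ n} \<times> {..<L ^ n}. angular_width L k (offset n p)) * (2 / P)
      \<le> (P * (9 * (5 / (2 * Q))) + 20 / Q * (real n * (4 * real L * P / Q))) * (2 / P)"
    using sum_angular_width_offset_le P by (intro mult_right_mono) (simp_all add: P_def Q_def)
  also have "\<dots> = 45 * Q / Q\<^sup>2 + 160 * real L * real n / Q\<^sup>2"
    using P Q by (simp add: field_simps power2_eq_square)
  also have "\<dots> \<le> (45 + 160 * real L) * real n / Q\<^sup>2"
    using assms Q by (simp add: Q_def add_divide_distrib[symmetric] divide_right_mono algebra_simps)
  also have "Q\<^sup>2 = real L ^ (2 * k)"
    by (simp add: Q_def power_mult[symmetric] mult.commute)
  finally show ?thesis
    by (simp add: P_def)
qed

end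

lemma power_le_of_le_floor_log:
  assumes "1 < b" "1 \<le> k" "int k \<le> \<lfloor>log (real b) (real n)\<rfloor>"
  shows "real b ^ k \<le> real n"
proof -
  have k_le: "real k \<le> log (real b) (real n)"
    using assms(3) by linarith
  \<comment> \<open>log b 0 = 0 in HOL, so 1 \<le> k excludes n = 0.\<close>
  then have "0 < n"
    using assms(2) by (cases n) (simp_all add: log_def)
  with k_le assms(1) show ?thesis
    by (simp add: le_log_iff powr_realpow)
qed

theorem lemmaA3:
  fixes L :: nat
  assumes "L \<ge> 2"
  shows "\<exists>C::real. \<forall>S n k. admissible L S \<longrightarrow> 1 \<le> k \<longrightarrow>
           int k \<le> \<lfloor>log (real L) (real n)\<rfloor> \<longrightarrow>
           (\<integral>\<^sup>+ \<theta>. indicator (Theta L k) \<theta> *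
              (\<integral>\<^sup>+ t. ennreal ((fcount L S n \<theta> t)\<^sup>2) \<partial>lborel) \<partial>lborel)
           \<le> ennreal (C * real n / real L ^ (2 * k))"
proof (intro exI[of _ "45 + 160 * real L"] allI impI)
  fix S n k
  assume adm: "admissible L S" and k: "1 \<le> k" and kn: "int k \<le> \<lfloor>log (real L) (real n)\<rfloor>"
  obtain row where "nested_rows L S row"
    using admissible_imp_nested_rows[OF adm] assms by auto
  then interpret nested_rows L S row .
  let ?I = "{..<L ^ n} \<times> {..<L ^ n}"
  define A where "A p = {\<theta> \<in> Theta L k. \<bar>proj \<theta> (offset n p)\<bar> \<le> 2}" for p
  have "indicator (Theta L k) \<theta> * (\<integral>\<^sup>+t. ennreal ((fcount L S n \<theta> t)\<^sup>2) \<partial>lborel)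
      \<le> ennreal (card {p \<in> ?I. \<theta> \<in> A p} * (2 / real L ^ n))" for \<theta>
  proof (cases "\<theta> \<in> Theta L k")
    case True
    with Theta_bounds[OF assms k True] have "0 \<le> sin \<theta>" "0 \<le> cos \<theta>"
      by simp_all
    with True show ?thesis
      using nn_integral_fcount_sq_le by (simp add: A_def)
  qed simp
  then have "(\<integral>\<^sup>+\<theta>. indicator (Theta L k) \<theta> * (\<integral>\<^sup>+t. ennreal ((fcount L S n \<theta> t)\<^sup>2) \<partial>lborel) \<partial>lborel)
      \<le> (\<integral>\<^sup>+\<theta>. ennreal (card {p \<in> ?I. \<theta> \<in> A p} * (2 / real L ^ n)) \<partial>lborel)"
    by (rule nn_integral_mono)
  also have "\<dots> \<le> ennreal ((\<Sum>p\<in>?I. angular_width L k (offset n p)) * (2 / real L ^ n))"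
    unfolding A_def
    by (rule nn_integral_card_le_sum_widths) (simp_all add: Theta_proj_le_subset_interval[OF assms k])
  also have "\<dots> \<le> ennreal ((45 + 160 * real L) * real n / real L ^ (2 * k))"
    using assms k kn by (intro ennreal_leI sum_angular_width_le power_le_of_le_floor_log) simp_all
  finally show "(\<integral>\<^sup>+\<theta>. indicator (Theta L k) \<theta> * (\<integral>\<^sup>+t. ennreal ((fcount L S n \<theta> t)\<^sup>2) \<partial>lborel) \<partial>lborel)
      \<le> ennreal ((45 + 160 * real L) * real n / real L ^ (2 * k))" .
qed

end
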